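(* Let $G$ be a finitely generated group which is fully residually $H$, where $H$ is finitely generated. Let $X, X'$ be finite generating sets for $G$ and $Y, Y'$ finite generating sets for $H$. Then $C_{G,X}^{H,Y} \preceq C_{G,X'}^{H,Y'}$.
   Context: $G$ is fully residually $H$ if for every finite $S \subseteq G-\{1\}$ there is a homomorphism $\phi:G\to H$ with $1 \notin \phi(S)$. For a homomorphism $\phi$, $|\phi|_X^Y := \max_{x\in X}|\phi(x)|_Y$ (word length in $Y$). $C_{G,X}^{H,Y}(R) := \min\{|\phi|_X^Y : \phi:G\to H,\ 1\notin\phi(B_R(G,X)-\{1\})\}$, where $B_R(G,X)$ is the closed ball of radius $R$ about $1$ in the $X$-word metric. For $f,g:\mathbb{N}\to\mathbb{N}$, $f\preceq g$ means there is a constant $K$ with $f(R)\le Kg(KR)+K$ for all $R$. *)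

theory Defs
  imports "HOL-Algebra.Algebra"
begin

definition word_prod :: "('a, 'm) monoid_scheme \<Rightarrow> 'a list \<Rightarrow> 'a" where
  "word_prod G ws = foldr (\<lambda>x y. monoid.mult G x y) ws (one G)"

definition fin_gen_set :: "('a, 'm) monoid_scheme \<Rightarrow> 'a set \<Rightarrow> bool" where
  "fin_gen_set G A \<longleftrightarrow> finite A \<and> A \<subseteq> carrier G \<and> generate G A = carrier G"

definition word_length :: "('a, 'm) monoid_scheme \<Rightarrow> 'a set \<Rightarrow> 'a \<Rightarrow> nat" where
  "word_length G A g = (LEAST n. \<exists>ws. length ws = n \<and>
      set ws \<subseteq> A \<union> m_inv G ` A \<and> word_prod G ws = g)"

definition word_ball :: "('a, 'm) monoid_scheme \<Rightarrow> 'a set \<Rightarrow> nat \<Rightarrow> 'a set" where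
  "word_ball G A R = {g \<in> carrier G. word_length G A g \<le> R}"

definition hom_size :: "('b, 'n) monoid_scheme \<Rightarrow> 'a set \<Rightarrow> 'b set \<Rightarrow> ('a \<Rightarrow> 'b) \<Rightarrow> nat" where
  "hom_size H A Y \<phi> = Max (insert 0 ((\<lambda>x. word_length H Y (\<phi> x)) ` A))"

definition fully_residually :: "('a, 'm) monoid_scheme \<Rightarrow> ('b, 'n) monoid_scheme \<Rightarrow> bool" where
  "fully_residually G H \<longleftrightarrow> (\<forall>S. finite S \<and> S \<subseteq> carrier G - {one G} \<longrightarrow>
      (\<exists>\<phi> \<in> hom G H. one H \<notin> \<phi> ` S))"

definition resid_growth ::
  "('a, 'm) monoid_scheme \<Rightarrow> 'a set \<Rightarrow> ('b, 'n) monoid_scheme \<Rightarrow> 'b set \<Rightarrow> nat \<Rightarrow> nat" where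
  "resid_growth G A H Y R = (LEAST n. \<exists>\<phi> \<in> hom G H.
      one H \<notin> \<phi> ` (word_ball G A R - {one G}) \<and> hom_size H A Y \<phi> = n)"

definition growth_preceq :: "(nat \<Rightarrow> nat) \<Rightarrow> (nat \<Rightarrow> nat) \<Rightarrow> bool" where
  "growth_preceq f g \<longleftrightarrow> (\<exists>K::nat. \<forall>R. f R \<le> K * g (K * R) + K)"

end

theory Submission
  imports Defs
begin

text \<open>A homomorphism sending every generator in \<open>A\<close> to an element of \<open>B\<close>-length at most \<open>m\<close>
  is \<open>m\<close>-Lipschitz from the \<open>A\<close>-word metric to the \<open>B\<close>-word metric. Applied to the identity,
  this gives constants \<open>c, d\<close> with \<open>|g|_{X'} \<le> c|g|_X\<close> and \<open>|h|_Y \<le> d|h|_{Y'}\<close>, so the \<open>X\<close>-ball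
  of radius \<open>R\<close> lies in the \<open>X'\<close>-ball of radius \<open>cR\<close> and \<open>|\<phi>|_X^Y \<le> cd|\<phi>|_{X'}^{Y'}\<close>. Hence a
  homomorphism realising \<open>C_{G,X'}^{H,Y'}(cR)\<close> (the minimum exists because balls are finite)
  witnesses \<open>C_{G,X}^{H,Y}(R) \<le> cd C_{G,X'}^{H,Y'}(cR)\<close>, and monotonicity of \<open>C\<close> in \<open>R\<close> gives
  the claim with \<open>K = cd\<close>.\<close>

abbreviation letters :: "('a, 'm) monoid_scheme \<Rightarrow> 'a set \<Rightarrow> 'a set" where
  "letters G A \<equiv> A \<union> m_inv G ` A"

lemma word_prod_Nil [simp]: "word_prod G [] = \<one>\<^bsub>G\<^esub>"
  by (simp add: word_prod_def)

lemma word_prod_Cons [simp]: "word_prod G (x # ws) = x \<otimes>\<^bsub>G\<^esub> word_prod G ws"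
  by (simp add: word_prod_def)

lemma word_length_le_length:
  "set ws \<subseteq> letters G A \<Longrightarrow> word_length G A (word_prod G ws) \<le> length ws"
  unfolding word_length_def by (intro Least_le) blast

context group
begin

lemma letters_subset_carrier: "A \<subseteq> carrier G \<Longrightarrow> letters G A \<subseteq> carrier G"
  by auto

lemma word_prod_closed:
  assumes "A \<subseteq> carrier G" "set ws \<subseteq> letters G A"
  shows "word_prod G ws \<in> carrier G"
  using assms(2) letters_subset_carrier[OF assms(1)] by (induction ws) auto

lemma word_prod_append:
  assumes "A \<subseteq> carrier G" "set ws \<subseteq> letters G A" "set vs \<subseteq> letters G A"
  shows "word_prod G (ws @ vs) = word_prod G ws \<otimes> word_prod G vs"
  using assms(2)
proof (induction ws)
  case Nil
  then show ?case using word_prod_closed[OF assms(1,3)] by simp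
next
  case (Cons w ws)
  have "w \<in> carrier G" "word_prod G ws \<in> carrier G" "word_prod G vs \<in> carrier G"
    using Cons.prems assms word_prod_closed letters_subset_carrier by auto
  then show ?case using Cons by (simp add: m_assoc)
qed

lemma inv_letters_closed:
  assumes "A \<subseteq> carrier G" "set ws \<subseteq> letters G A"
  shows "set (rev (map (m_inv G) ws)) \<subseteq> letters G A"
  using assms by (auto simp: subset_iff)

lemma word_prod_inv:
  assumes A: "A \<subseteq> carrier G" and ws: "set ws \<subseteq> letters G A"
  shows "word_prod G (rev (map (m_inv G) ws)) = inv (word_prod G ws)"
  using ws
proof (induction ws)
  case Nil
  then show ?case by simp
next
  case (Cons w ws)
  have w: "w \<in> carrier G" and ws: "set ws \<subseteq> letters G A"
    using Cons.prems A by auto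
  have "word_prod G (rev (map (m_inv G) (w # ws)))
      = word_prod G (rev (map (m_inv G) ws)) \<otimes> word_prod G [m_inv G w]"
    using word_prod_append[OF A inv_letters_closed[OF A ws]] inv_letters_closed[OF A Cons.prems]
    by simp
  also have "\<dots> = inv (word_prod G ws) \<otimes> inv w"
    using Cons.IH[OF ws] w by simp
  also have "\<dots> = inv (w \<otimes> word_prod G ws)"
    using w word_prod_closed[OF A ws] by (simp add: inv_mult_group)
  finally show ?case by simp
qed

lemma generate_imp_word:
  assumes A: "A \<subseteq> carrier G" and g: "g \<in> generate G A"
  obtains ws where "set ws \<subseteq> letters G A" "word_prod G ws = g"
proof -
  have "\<exists>ws. set ws \<subseteq> letters G A \<and> word_prod G ws = g"
    using g
  proof (induction rule: generate.induct)
    case one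
    show ?case by (intro exI[of _ "[]"]) simp
  next
    case (incl h)
    then show ?case using A by (intro exI[of _ "[h]"]) auto
  next
    case (inv h)
    then show ?case using A by (intro exI[of _ "[m_inv G h]"]) auto
  next
    case (eng h1 h2)
    then obtain w1 w2 where "set w1 \<subseteq> letters G A" "word_prod G w1 = h1"
      "set w2 \<subseteq> letters G A" "word_prod G w2 = h2" by blast
    then show ?case using word_prod_append[OF A] by (intro exI[of _ "w1 @ w2"]) auto
  qed
  then show ?thesis using that by blast
qed

lemma word_length_attained:
  assumes "A \<subseteq> carrier G" "generate G A = carrier G" "g \<in> carrier G"
  obtains ws where "length ws = word_length G A g" "set ws \<subseteq> letters G A" "word_prod G ws = g"
proof -
  obtain ws where "set ws \<subseteq> letters G A" "word_prod G ws = g"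
    using generate_imp_word assms by blast
  then have "\<exists>n ws. length ws = n \<and> set ws \<subseteq> letters G A \<and> word_prod G ws = g" by blast
  then have "\<exists>ws. length ws = word_length G A g \<and> set ws \<subseteq> letters G A \<and> word_prod G ws = g"
    unfolding word_length_def by (rule LeastI_ex)
  then show ?thesis using that by blast
qed

lemma word_length_mult_le:
  assumes A: "A \<subseteq> carrier G" "generate G A = carrier G" and "x \<in> carrier G" "y \<in> carrier G"
  shows "word_length G A (x \<otimes> y) \<le> word_length G A x + word_length G A y"
proof -
  obtain u v where
    u: "length u = word_length G A x" "set u \<subseteq> letters G A" "word_prod G u = x" and
    v: "length v = word_length G A y" "set v \<subseteq> letters G A" "word_prod G v = y"
    using word_length_attained[OF A] assms(3,4) by metis
  have "word_length G A (word_prod G (u @ v)) \<le> length (u @ v)"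
    using u v by (intro word_length_le_length) auto
  then show ?thesis using u v word_prod_append[OF A(1) u(2) v(2)] by simp
qed

lemma word_length_inv_le:
  assumes A: "A \<subseteq> carrier G" "generate G A = carrier G" and "x \<in> carrier G"
  shows "word_length G A (inv x) \<le> word_length G A x"
proof -
  obtain ws where ws: "length ws = word_length G A x" "set ws \<subseteq> letters G A" "word_prod G ws = x"
    using word_length_attained[OF A assms(3)] by metis
  have "word_length G A (word_prod G (rev (map (m_inv G) ws))) \<le> length (rev (map (m_inv G) ws))"
    using inv_letters_closed[OF A(1) ws(2)] by (rule word_length_le_length)
  then show ?thesis using ws word_prod_inv[OF A(1) ws(2)] by simp
qed

lemma finite_word_ball:
  assumes "fin_gen_set G A"
  shows "finite (word_ball G A R)"
proof -
  have A: "finite A" "A \<subseteq> carrier G" "generate G A = carrier G"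
    using assms by (auto simp: fin_gen_set_def)
  have "word_ball G A R \<subseteq> word_prod G ` {ws. set ws \<subseteq> letters G A \<and> length ws \<le> R}"
  proof
    fix g assume "g \<in> word_ball G A R"
    then have g: "g \<in> carrier G" "word_length G A g \<le> R" by (auto simp: word_ball_def)
    then obtain ws where "length ws = word_length G A g" "set ws \<subseteq> letters G A" "word_prod G ws = g"
      using word_length_attained[OF A(2,3)] by metis
    then show "g \<in> word_prod G ` {ws. set ws \<subseteq> letters G A \<and> length ws \<le> R}" using g by auto
  qed
  moreover have "finite {ws. set ws \<subseteq> letters G A \<and> length ws \<le> R}"
    using A by (intro finite_lists_length_le) auto
  ultimately show ?thesis by (rule finite_subset[OF _ finite_imageI])
qed

end

lemma (in group_hom) word_length_hom_le:
  assumes A: "A \<subseteq> carrier G" "generate G A = carrier G"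
    and B: "B \<subseteq> carrier H" "generate H B = carrier H"
    and gens: "\<forall>a\<in>A. word_length H B (h a) \<le> m"
    and g: "g \<in> carrier G"
  shows "word_length H B (h g) \<le> m * word_length G A g"
proof -
  have "word_length H B (h (word_prod G ws)) \<le> m * length ws" if "set ws \<subseteq> letters G A" for ws
    using that
  proof (induction ws)
    case Nil
    show ?case using word_length_le_length[of "[]" B H] by simp
  next
    case (Cons w ws)
    have w: "w \<in> carrier G" and ws: "word_prod G ws \<in> carrier G"
      using Cons.prems A(1) G.word_prod_closed by auto
    have "word_length H B (h w) \<le> m"
    proof (cases "w \<in> A")
      case True
      then show ?thesis using gens by simp
    next
      case False
      then obtain a where "a \<in> A" "w = inv\<^bsub>G\<^esub> a" using Cons.prems by auto
      then show ?thesis using gens A(1) H.word_length_inv_le[OF B, of "h a"] by fastforce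
    qed
    moreover have "word_length H B (h (w \<otimes>\<^bsub>G\<^esub> word_prod G ws))
        \<le> word_length H B (h w) + word_length H B (h (word_prod G ws))"
      using H.word_length_mult_le[OF B] w ws by simp
    ultimately show ?case using Cons.IH Cons.prems by simp
  qed
  moreover obtain ws where "length ws = word_length G A g" "set ws \<subseteq> letters G A" "word_prod G ws = g"
    using G.word_length_attained[OF A g] by metis
  ultimately show ?thesis by metis
qed

lemma (in group) word_length_change_generators:
  assumes "fin_gen_set G A" "fin_gen_set G B"
    and "\<forall>a\<in>A. word_length G B a \<le> c" and "g \<in> carrier G"
  shows "word_length G B g \<le> c * word_length G A g"
proof -
  interpret id: group_hom G G id
    by unfold_locales (simp add: hom_def)
  show ?thesis using id.word_length_hom_le assms by (simp add: fin_gen_set_def)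
qed

lemma finite_imp_word_length_bounded:
  assumes "finite A"
  obtains c :: nat where "c \<ge> 1" "\<forall>a\<in>A. word_length G B a \<le> c"
proof
  show "Max (insert 1 (word_length G B ` A)) \<ge> 1"
    using assms by simp
  show "\<forall>a\<in>A. word_length G B a \<le> Max (insert 1 (word_length G B ` A))"
    using assms by simp
qed

lemma hom_size_le:
  "finite A \<Longrightarrow> \<forall>a\<in>A. word_length H Y (\<phi> a) \<le> n \<Longrightarrow> hom_size H A Y \<phi> \<le> n"
  unfolding hom_size_def by auto

lemma word_length_le_hom_size:
  "finite A \<Longrightarrow> a \<in> A \<Longrightarrow> word_length H Y (\<phi> a) \<le> hom_size H A Y \<phi>"
  unfolding hom_size_def by (intro Max_ge) auto

lemma hom_size_change_generators:
  assumes G: "group G" and H: "group H" and \<phi>: "\<phi> \<in> hom G H"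
    and A: "fin_gen_set G A" "fin_gen_set G A'"
    and B: "fin_gen_set H B" "fin_gen_set H B'"
    and c: "\<forall>x\<in>A. word_length G A' x \<le> c"
    and d: "\<forall>y\<in>B'. word_length H B y \<le> d"
  shows "hom_size H A B \<phi> \<le> c * d * hom_size H A' B' \<phi>"
proof (rule hom_size_le)
  interpret group_hom G H \<phi>
    using G H \<phi> by (simp add: group_hom_def group_hom_axioms_def)
  have gensA': "A' \<subseteq> carrier G" "generate G A' = carrier G" and fin: "finite A" "finite A'"
    and gensB': "B' \<subseteq> carrier H" "generate H B' = carrier H"
    using A B by (auto simp: fin_gen_set_def)
  have \<phi>_gens: "\<forall>a\<in>A'. word_length H B' (\<phi> a) \<le> hom_size H A' B' \<phi>"
    using word_length_le_hom_size[OF fin(2)] by blast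
  show "finite A" by (fact fin(1))
  show "\<forall>x\<in>A. word_length H B (\<phi> x) \<le> c * d * hom_size H A' B' \<phi>"
  proof
    fix x assume x: "x \<in> A"
    have xG: "x \<in> carrier G" using x A(1) by (auto simp: fin_gen_set_def)
    have "word_length H B (\<phi> x) \<le> d * word_length H B' (\<phi> x)"
      using H.word_length_change_generators[OF B(2,1) d] xG by simp
    also have "word_length H B' (\<phi> x) \<le> hom_size H A' B' \<phi> * word_length G A' x"
      by (rule word_length_hom_le[OF gensA' gensB' \<phi>_gens xG])
    also have "word_length G A' x \<le> c"
      using c x by simp
    finally show "word_length H B (\<phi> x) \<le> c * d * hom_size H A' B' \<phi>"
      by (simp add: mult_le_mono2 algebra_simps)
  qed
qed

lemma word_ball_change_generators:
  assumes "group G" "fin_gen_set G A" "fin_gen_set G A'"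
    and "\<forall>x\<in>A. word_length G A' x \<le> c"
  shows "word_ball G A R \<subseteq> word_ball G A' (c * R)"
proof
  fix g assume "g \<in> word_ball G A R"
  then have g: "g \<in> carrier G" "word_length G A g \<le> R" by (auto simp: word_ball_def)
  have "word_length G A' g \<le> c * word_length G A g"
    by (rule group.word_length_change_generators[OF assms g(1)])
  also have "\<dots> \<le> c * R" using g(2) by simp
  finally show "g \<in> word_ball G A' (c * R)" using g(1) by (simp add: word_ball_def)
qed

lemma resid_growth_attained:
  assumes "group G" "fin_gen_set G A" "fully_residually G H"
  obtains \<phi> where "\<phi> \<in> hom G H" "\<one>\<^bsub>H\<^esub> \<notin> \<phi> ` (word_ball G A R - {\<one>\<^bsub>G\<^esub>})"
    "hom_size H A Y \<phi> = resid_growth G A H Y R"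
proof -
  have "\<exists>\<phi> \<in> hom G H. \<one>\<^bsub>H\<^esub> \<notin> \<phi> ` (word_ball G A R - {\<one>\<^bsub>G\<^esub>})"
    using assms group.finite_word_ball[OF assms(1,2), of R]
    unfolding fully_residually_def word_ball_def by auto
  then have "\<exists>n. \<exists>\<phi> \<in> hom G H. \<one>\<^bsub>H\<^esub> \<notin> \<phi> ` (word_ball G A R - {\<one>\<^bsub>G\<^esub>}) \<and> hom_size H A Y \<phi> = n"
    by blast
  then have "\<exists>\<phi> \<in> hom G H. \<one>\<^bsub>H\<^esub> \<notin> \<phi> ` (word_ball G A R - {\<one>\<^bsub>G\<^esub>})
      \<and> hom_size H A Y \<phi> = resid_growth G A H Y R"
    unfolding resid_growth_def by (rule LeastI_ex)
  then show ?thesis using that by blast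
qed

lemma resid_growth_le:
  "\<phi> \<in> hom G H \<Longrightarrow> \<one>\<^bsub>H\<^esub> \<notin> \<phi> ` (word_ball G A R - {\<one>\<^bsub>G\<^esub>})
    \<Longrightarrow> resid_growth G A H Y R \<le> hom_size H A Y \<phi>"
  unfolding resid_growth_def by (intro Least_le) blast

lemma resid_growth_mono:
  assumes "group G" "fin_gen_set G A" "fully_residually G H" "R \<le> R'"
  shows "resid_growth G A H Y R \<le> resid_growth G A H Y R'"
proof -
  obtain \<phi> where \<phi>: "\<phi> \<in> hom G H" "\<one>\<^bsub>H\<^esub> \<notin> \<phi> ` (word_ball G A R' - {\<one>\<^bsub>G\<^esub>})"
    "hom_size H A Y \<phi> = resid_growth G A H Y R'"
    using resid_growth_attained[OF assms(1-3)] by metis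
  have "word_ball G A R \<subseteq> word_ball G A R'" using assms(4) by (auto simp: word_ball_def)
  then have "\<one>\<^bsub>H\<^esub> \<notin> \<phi> ` (word_ball G A R - {\<one>\<^bsub>G\<^esub>})"
    using \<phi>(2) by blast
  then show ?thesis using resid_growth_le[OF \<phi>(1)] \<phi>(3) by metis
qed

theorem mainTheorem6:
  fixes G :: "('a, 'm) monoid_scheme" and H :: "('b, 'n) monoid_scheme"
    and X1 X2 :: "'a set" and Y1 Y2 :: "'b set"
  assumes "group G" and "group H"
    and "fully_residually G H"
    and "fin_gen_set G X1" and "fin_gen_set G X2"
    and "fin_gen_set H Y1" and "fin_gen_set H Y2"
  shows "growth_preceq (resid_growth G X1 H Y1) (resid_growth G X2 H Y2)"
proof -
  obtain c where c: "c \<ge> 1" "\<forall>x\<in>X1. word_length G X2 x \<le> c"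
    using finite_imp_word_length_bounded assms(4) by (metis fin_gen_set_def)
  obtain d where d: "d \<ge> 1" "\<forall>y\<in>Y2. word_length H Y1 y \<le> d"
    using finite_imp_word_length_bounded assms(7) by (metis fin_gen_set_def)
  have "resid_growth G X1 H Y1 R \<le> c * d * resid_growth G X2 H Y2 (c * d * R) + c * d" for R
  proof -
    obtain \<phi> where \<phi>: "\<phi> \<in> hom G H" "\<one>\<^bsub>H\<^esub> \<notin> \<phi> ` (word_ball G X2 (c * R) - {\<one>\<^bsub>G\<^esub>})"
      "hom_size H X2 Y2 \<phi> = resid_growth G X2 H Y2 (c * R)"
      using resid_growth_attained[OF assms(1,5,3)] by metis
    have "\<one>\<^bsub>H\<^esub> \<notin> \<phi> ` (word_ball G X1 R - {\<one>\<^bsub>G\<^esub>})"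
      using \<phi>(2) word_ball_change_generators[OF assms(1,4,5) c(2)] by blast
    then have "resid_growth G X1 H Y1 R \<le> hom_size H X1 Y1 \<phi>"
      using resid_growth_le[OF \<phi>(1)] by blast
    also have "\<dots> \<le> c * d * resid_growth G X2 H Y2 (c * R)"
      using hom_size_change_generators[OF assms(1,2) \<phi>(1) assms(4-7) c(2) d(2)] \<phi>(3) by simp
    also have "\<dots> \<le> c * d * resid_growth G X2 H Y2 (c * d * R)"
      using resid_growth_mono[OF assms(1,5,3)] d(1) by simp
    finally show ?thesis by simp
  qed
  then show ?thesis unfolding growth_preceq_def by blast
qed

end
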